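(* Let $k$ be a positive integer and let $G$ be a connected $K_{1,4}$-free graph of order $n$. If $\sigma_2(G) \ge n-k$, then $G$ has a spanning tree $T$ with $|L(T)|+|B(T)| \le k+2$.
   Context: All graphs are finite and simple. For a tree $T$, a leaf is a vertex of degree one in $T$ and a branch vertex is a vertex of degree at least three in $T$; $L(T)$ and $B(T)$ denote the sets of leaves and of branch vertices of $T$. A graph is $K_{1,4}$-free if it contains no induced subgraph isomorphic to $K_{1,4}$. For a positive integer $p$, $\sigma_p(G)=+\infty$ if the independence number of $G$ is less than $p$, and otherwise $\sigma_p(G)$ is the minimum of $\sum_{i=1}^p d_G(v_i)$ over all independent sets $\{v_1,\dots,v_p\}$ of $G$ of size $p$. *)

theory Defs
  imports Main "HOL-Library.Extended_Nat"
begin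

definition simple_graph :: "'a set \<Rightarrow> 'a set set \<Rightarrow> bool" where
  "simple_graph V E \<longleftrightarrow> finite V \<and>
     (\<forall>e\<in>E. \<exists>u v. e = {u, v} \<and> u \<noteq> v \<and> u \<in> V \<and> v \<in> V)"

definition neighbours :: "'a set set \<Rightarrow> 'a \<Rightarrow> 'a set" where
  "neighbours E u = {v. {u, v} \<in> E}"

definition degree :: "'a set set \<Rightarrow> 'a \<Rightarrow> nat" where
  "degree E u = card (neighbours E u)"

definition connected_graph :: "'a set \<Rightarrow> 'a set set \<Rightarrow> bool" where
  "connected_graph V E \<longleftrightarrow> V \<noteq> {} \<and>
     (\<forall>u\<in>V. \<forall>v\<in>V. (u, v) \<in> {(x, y). {x, y} \<in> E}\<^sup>*)"

definition acyclic_graph :: "'a set set \<Rightarrow> bool" where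
  "acyclic_graph E \<longleftrightarrow>
     (\<forall>u v. {u, v} \<in> E \<longrightarrow> (u, v) \<notin> {(x, y). {x, y} \<in> E - {{u, v}}}\<^sup>*)"

definition is_tree :: "'a set \<Rightarrow> 'a set set \<Rightarrow> bool" where
  "is_tree V T \<longleftrightarrow> simple_graph V T \<and> connected_graph V T \<and> acyclic_graph T"

definition spanning_tree :: "'a set \<Rightarrow> 'a set set \<Rightarrow> 'a set set \<Rightarrow> bool" where
  "spanning_tree V E T \<longleftrightarrow> T \<subseteq> E \<and> is_tree V T"

definition leaves :: "'a set \<Rightarrow> 'a set set \<Rightarrow> 'a set" where
  "leaves V T = {v \<in> V. degree T v = 1}"

definition branch_vertices :: "'a set \<Rightarrow> 'a set set \<Rightarrow> 'a set" where
  "branch_vertices V T = {v \<in> V. degree T v \<ge> 3}"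

definition independent_set :: "'a set \<Rightarrow> 'a set set \<Rightarrow> 'a set \<Rightarrow> bool" where
  "independent_set V E S \<longleftrightarrow> S \<subseteq> V \<and> (\<forall>u\<in>S. \<forall>v\<in>S. {u, v} \<notin> E)"

definition K14_free :: "'a set \<Rightarrow> 'a set set \<Rightarrow> bool" where
  "K14_free V E \<longleftrightarrow> \<not> (\<exists>c\<in>V. \<exists>S. S \<subseteq> neighbours E c \<and> card S = 4 \<and> independent_set V E S)"

text \<open>sigma_p, with value \<infinity> if there is no independent set of size p (Inf {} = \<infinity> in enat).\<close>
definition sigma :: "nat \<Rightarrow> 'a set \<Rightarrow> 'a set set \<Rightarrow> enat" where
  "sigma p V E = Inf {enat (\<Sum>v\<in>S. degree E v) | S. independent_set V E S \<and> card S = p}"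

end

theory Submission
  imports Defs
begin

text \<open>Let T be a spanning tree of G minimising |L(T)| + |B(T)|. If T has no branch vertex it is a
  path with at most two leaves. Otherwise pick a branch vertex z and a neighbour c of z such that all
  other branch vertices lie behind c, so that the remaining branches at z are paths ending in leaves;
  among all such choices take one with deg_T z minimal, and let v and u be the leaves of two of these
  paths. Edge exchanges that would decrease |L(T)| + |B(T)|, or deg_T z, show that v has no
  G-neighbour that is a leaf of T or a branch vertex other than z, and that for every G-neighbour w
  of u off the tree, the vertex following w on the tree path to u has T-degree 2 and is not adjacent
  to v. These vertices are distinct for distinct w, hence
  deg_G u + deg_G v <= |{x. deg_T x = 2}| + 2 = n - |L(T)| - |B(T)| + 2, while u and v are
  non-adjacent, so sigma_2(G) <= deg_G u + deg_G v.\<close>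

section \<open>Reachability along edge sets\<close>

definition reach :: "'a set set \<Rightarrow> 'a \<Rightarrow> 'a \<Rightarrow> bool" where
  "reach F x y \<longleftrightarrow> (x, y) \<in> {(a, b). {a, b} \<in> F}\<^sup>*"

lemma reach_refl [simp]: "reach F x x"
  by (simp add: reach_def)

lemma reach_edge: "{x, y} \<in> F \<Longrightarrow> reach F x y"
  by (auto simp: reach_def)

lemma reach_trans: "reach F x y \<Longrightarrow> reach F y z \<Longrightarrow> reach F x z"
  unfolding reach_def by (rule rtrancl_trans)

lemma reach_step: "reach F x y \<Longrightarrow> {y, z} \<in> F \<Longrightarrow> reach F x z"
  using reach_edge reach_trans by metis

lemma reach_mono: "F \<subseteq> G \<Longrightarrow> reach F x y \<Longrightarrow> reach G x y"
  unfolding reach_def by (rule rtrancl_mono[THEN subsetD]) auto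

lemma reach_induct [consumes 1, case_names base step]:
  assumes "reach F a x" and "P a"
    and "\<And>y z. reach F a y \<Longrightarrow> {y, z} \<in> F \<Longrightarrow> P y \<Longrightarrow> P z"
  shows "P x"
  using assms(1) unfolding reach_def
proof (induction rule: rtrancl_induct)
  case base
  then show ?case using assms(2) by simp
next
  case (step y z)
  then show ?case using assms(3)[of y z] by (auto simp: reach_def)
qed

lemma reach_sym: "reach F x y \<Longrightarrow> reach F y x"
proof (induction rule: reach_induct)
  case (step y z)
  then have "{z, y} \<in> F" by (simp add: insert_commute)
  then show ?case using step(3) reach_edge reach_trans by metis
qed simp

lemma reach_avoid:
  assumes "reach F a x" and "\<And>w. reach F a w \<Longrightarrow> w \<noteq> z"
  shows "reach {f \<in> F. z \<notin> f} a x"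
  using assms(1)
proof (induction rule: reach_induct)
  case (step y w)
  have "w \<noteq> z" using assms(2) reach_step[OF step(1,2)] .
  moreover have "y \<noteq> z" using assms(2)[OF step(1)] .
  ultimately have "{y, w} \<in> {f \<in> F. z \<notin> f}" using step(2) by simp
  then show ?case using step(3) reach_step by metis
qed simp

lemma reach_insert_edgeD:
  assumes "reach (insert {a, b} F) x y"
  shows "reach F x y \<or> (reach F x a \<and> reach F b y) \<or> (reach F x b \<and> reach F a y)"
  using assms
proof (induction rule: reach_induct)
  case (step y z)
  show ?case
  proof (cases "{y, z} = {a, b}")
    case True
    then consider "y = a" "z = b" | "y = b" "z = a" by (auto simp: doubleton_eq_iff)
    then show ?thesis using step(3) by cases (auto intro: reach_trans reach_sym)
  next
    case False
    then have "{y, z} \<in> F" using step(2) by simp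
    then show ?thesis using step(3) reach_step by metis
  qed
qed simp

lemma reach_first_step:
  assumes "reach F x y" and "x \<noteq> y"
  shows "\<exists>s. {x, s} \<in> F \<and> reach {f \<in> F. x \<notin> f} s y"
proof -
  have "y = x \<or> (\<exists>s. {x, s} \<in> F \<and> reach {f \<in> F. x \<notin> f} s y)"
    using assms(1)
  proof (induction rule: reach_induct)
    case (step y z)
    consider "z = x" | "y = x" "z \<noteq> x" | "y \<noteq> x" "z \<noteq> x" by blast
    then show ?case
    proof cases
      case 2
      then have "{x, z} \<in> F" using step(2) by simp
      then show ?thesis by (intro disjI2 exI[of _ z]) simp
    next
      case 3
      then obtain s where "{x, s} \<in> F" "reach {f \<in> F. x \<notin> f} s y"
        using step(3) by blast
      moreover have "{y, z} \<in> {f \<in> F. x \<notin> f}" using step(2) 3 by simp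
      ultimately show ?thesis using reach_step by fast
    qed simp
  qed simp
  then show ?thesis using assms(2) by simp
qed

lemma reach_Diff_edge:
  assumes "reach F x y" and "reach (F - {{p, q}}) p q"
  shows "reach (F - {{p, q}}) x y"
  using assms(1)
proof (induction rule: reach_induct)
  case (step y z)
  show ?case
  proof (cases "{y, z} = {p, q}")
    case True
    then consider "y = p" "z = q" | "y = q" "z = p" by (auto simp: doubleton_eq_iff)
    then show ?thesis using step(3) assms(2) by cases (auto intro: reach_trans reach_sym)
  next
    case False
    then show ?thesis using step(2) step(3) reach_step by fast
  qed
qed simp

lemma connected_graph_iff_reach:
  "connected_graph V E \<longleftrightarrow> V \<noteq> {} \<and> (\<forall>u\<in>V. \<forall>v\<in>V. reach E u v)"
  by (simp add: connected_graph_def reach_def)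

lemma acyclic_graph_iff_reach:
  "acyclic_graph E \<longleftrightarrow> (\<forall>u v. {u, v} \<in> E \<longrightarrow> \<not> reach (E - {{u, v}}) u v)"
  by (simp add: acyclic_graph_def reach_def)

lemma mem_neighbours_iff: "y \<in> neighbours E x \<longleftrightarrow> {x, y} \<in> E"
  by (simp add: neighbours_def)

lemma simple_graph_edgeD:
  assumes "simple_graph V E" and "{x, y} \<in> E"
  shows "x \<in> V" "y \<in> V" "x \<noteq> y"
proof -
  obtain u v where "{x, y} = {u, v}" "u \<noteq> v" "u \<in> V" "v \<in> V"
    using assms unfolding simple_graph_def by blast
  then show "x \<in> V" "y \<in> V" "x \<noteq> y" by (auto simp: doubleton_eq_iff)
qed

lemma simple_graph_finite_edges:
  assumes "simple_graph V E"
  shows "finite E"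
proof -
  have "E \<subseteq> Pow V"
  proof
    fix e assume "e \<in> E"
    then obtain u v where "e = {u, v}" "u \<in> V" "v \<in> V"
      using assms unfolding simple_graph_def by blast
    then show "e \<in> Pow V" by simp
  qed
  moreover have "finite V" using assms by (simp add: simple_graph_def)
  ultimately show ?thesis by (meson finite_Pow_iff finite_subset)
qed

lemma simple_graph_finite_neighbours:
  assumes "simple_graph V E"
  shows "finite (neighbours E x)"
proof -
  have "neighbours E x \<subseteq> V"
    using simple_graph_edgeD(2)[OF assms] by (auto simp: neighbours_def)
  moreover have "finite V" using assms by (simp add: simple_graph_def)
  ultimately show ?thesis by (rule finite_subset)
qed

section \<open>Trees and edge exchanges\<close>

definition del_vertex :: "'a set set \<Rightarrow> 'a \<Rightarrow> 'a set set" where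
  "del_vertex T z = {f \<in> T. z \<notin> f}"

locale tree_on =
  fixes V :: "'a set" and T :: "'a set set"
  assumes is_tree: "is_tree V T"
begin

lemma simple_graph: "simple_graph V T"
  using is_tree by (simp add: is_tree_def)

lemma finite_V: "finite V"
  using simple_graph by (simp add: simple_graph_def)

lemma finite_neighbours: "finite (neighbours T x)"
  using simple_graph by (rule simple_graph_finite_neighbours)

lemmas edge_in_V = simple_graph_edgeD[OF simple_graph]

lemma reach_all: "x \<in> V \<Longrightarrow> y \<in> V \<Longrightarrow> reach T x y"
  using is_tree by (simp add: is_tree_def connected_graph_iff_reach)

lemma bridge: "{p, q} \<in> T \<Longrightarrow> \<not> reach (T - {{p, q}}) p q"
  using is_tree by (simp add: is_tree_def acyclic_graph_iff_reach)

lemma bridge_rev: "{p, q} \<in> T \<Longrightarrow> \<not> reach (T - {{p, q}}) q p"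
  using bridge reach_sym by fast

lemma reach_in_V:
  assumes "reach F x y" and "F \<subseteq> T" and "x \<in> V"
  shows "y \<in> V"
  using assms(1)
proof (induction rule: reach_induct)
  case (step y z)
  then show ?case using assms(2) edge_in_V(2)[of y z] by blast
qed (use assms(3) in simp)

lemma cut_edge_sides:
  assumes "{p, q} \<in> T" and "x \<in> V"
  shows "reach (T - {{p, q}}) p x \<or> reach (T - {{p, q}}) q x"
proof -
  have "reach T p x" using reach_all edge_in_V(1)[OF assms(1)] assms(2) by simp
  then show ?thesis
  proof (induction rule: reach_induct)
    case (step y z)
    show ?case
    proof (cases "{y, z} = {p, q}")
      case True
      then have "z = p \<or> z = q" by (auto simp: doubleton_eq_iff)
      then show ?thesis by auto
    next
      case False
      then have "{y, z} \<in> T - {{p, q}}" using step(2) by simp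
      then show ?thesis using step(3) by (meson reach_step)
    qed
  qed simp
qed

lemma reach_del_vertex_iff:
  assumes "{z, c} \<in> T"
  shows "reach (T - {{z, c}}) c x \<longleftrightarrow> reach (del_vertex T z) c x"
proof
  assume "reach (T - {{z, c}}) c x"
  moreover have "\<And>w. reach (T - {{z, c}}) c w \<Longrightarrow> w \<noteq> z"
    using bridge_rev[OF assms] by blast
  ultimately have "reach {f \<in> T - {{z, c}}. z \<notin> f} c x" by (rule reach_avoid)
  then show "reach (del_vertex T z) c x"
    by (rule reach_mono[rotated]) (auto simp: del_vertex_def)
next
  assume "reach (del_vertex T z) c x"
  then show "reach (T - {{z, c}}) c x"
    by (rule reach_mono[rotated]) (auto simp: del_vertex_def)
qed

lemma del_vertex_branches_disjoint:
  assumes "{z, c} \<in> T" "{z, c'} \<in> T" "c \<noteq> c'"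
    and "reach (del_vertex T z) c x" "reach (del_vertex T z) c' x"
  shows False
proof -
  have "reach (del_vertex T z) c c'" using reach_trans[OF assms(4) reach_sym[OF assms(5)]] .
  then have "reach (T - {{z, c}}) c c'" using reach_del_vertex_iff[OF assms(1)] by blast
  moreover have "{c', z} \<in> T - {{z, c}}"
    using assms(2,3) by (auto simp: insert_commute doubleton_eq_iff)
  ultimately have "reach (T - {{z, c}}) c z" by (rule reach_step)
  then show False using bridge_rev[OF assms(1)] by blast
qed

lemma unique_edge_towards:
  assumes "w \<in> V" "u \<in> V" "w \<noteq> u"
  shows "\<exists>!s. {w, s} \<in> T \<and> \<not> reach (T - {{w, s}}) w u"
proof (rule ex_ex1I)
  obtain s where s: "{w, s} \<in> T" and su: "reach {f \<in> T. w \<notin> f} s u"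
    using reach_first_step[OF reach_all[OF assms(1,2)] assms(3)] by blast
  from su have su': "reach (T - {{w, s}}) s u" by (rule reach_mono[rotated]) blast
  have "\<not> reach (T - {{w, s}}) w u"
  proof
    assume "reach (T - {{w, s}}) w u"
    then have "reach (T - {{w, s}}) w s" by (rule reach_trans[OF _ reach_sym[OF su']])
    then show False using bridge[OF s] by blast
  qed
  then show "\<exists>s. {w, s} \<in> T \<and> \<not> reach (T - {{w, s}}) w u" using s by blast
next
  fix s1 s2
  assume 1: "{w, s1} \<in> T \<and> \<not> reach (T - {{w, s1}}) w u"
    and 2: "{w, s2} \<in> T \<and> \<not> reach (T - {{w, s2}}) w u"
  have "reach (T - {{w, s1}}) s1 u" using 1 cut_edge_sides[of w s1 u] assms(2) by blast
  then have r1: "reach (del_vertex T w) s1 u" using 1 reach_del_vertex_iff by blast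
  have "reach (T - {{w, s2}}) s2 u" using 2 cut_edge_sides[of w s2 u] assms(2) by blast
  then have r2: "reach (del_vertex T w) s2 u" using 2 reach_del_vertex_iff by blast
  show "s1 = s2"
  proof (rule ccontr)
    assume "s1 \<noteq> s2"
    with 1 2 r1 r2 show False using del_vertex_branches_disjoint by blast
  qed
qed

text \<open>The neighbour of w on the path from w to u.\<close>
definition toward :: "'a \<Rightarrow> 'a \<Rightarrow> 'a" where
  "toward w u = (THE s. {w, s} \<in> T \<and> \<not> reach (T - {{w, s}}) w u)"

lemma toward:
  assumes "w \<in> V" "u \<in> V" "w \<noteq> u"
  shows "{w, toward w u} \<in> T" "\<not> reach (T - {{w, toward w u}}) w u"
  using theI'[OF unique_edge_towards[OF assms]] unfolding toward_def by auto

lemma toward_unique: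
  assumes "w \<in> V" "u \<in> V" "w \<noteq> u" "{w, s} \<in> T" "\<not> reach (T - {{w, s}}) w u"
  shows "toward w u = s"
  using unique_edge_towards[OF assms(1-3)] toward[OF assms(1-3)] assms(4,5) by blast

lemma toward_side:
  assumes "w \<in> V" "u \<in> V" "w \<noteq> u"
  shows "reach (T - {{w, toward w u}}) (toward w u) u"
  using cut_edge_sides[OF toward(1)[OF assms] assms(2)] toward(2)[OF assms] by blast

lemma exchange_reach:
  assumes pq: "{p, q} \<in> T" and ab: "a \<in> V" "b \<in> V"
    and sep: "\<not> reach (T - {{p, q}}) a b" and x: "x \<in> V"
  shows "reach (insert {a, b} (T - {{p, q}})) p x"
proof -
  let ?F = "T - {{p, q}}"
  let ?T' = "insert {a, b} ?F"
  have F: "reach ?F y y' \<Longrightarrow> reach ?T' y y'" for y y'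
    by (rule reach_mono[rotated]) auto
  have link: "reach ?T' y y'" if "reach ?F y a" "reach ?F b y'" for y y'
    using reach_trans[OF reach_step[OF F[OF that(1)]] F[OF that(2)]] by simp
  have not_both: False if "reach ?F y a" "reach ?F y b" for y
    using sep reach_trans[OF reach_sym[OF that(1)] that(2)] by blast
  have "reach ?T' p q"
  proof (cases "reach ?F p a")
    case True
    then have "reach ?F q b" using cut_edge_sides[OF pq ab(2)] not_both by blast
    then show ?thesis using link[OF True reach_sym] by blast
  next
    case False
    then have "reach ?F q a" "reach ?F p b"
      using cut_edge_sides[OF pq ab(1)] cut_edge_sides[OF pq ab(2)] not_both by blast+
    then show ?thesis using reach_sym[OF link[OF _ reach_sym]] by blast
  qed
  moreover have "reach ?F p x \<or> reach ?F q x" using cut_edge_sides[OF pq x] .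
  ultimately show ?thesis using F reach_trans[of ?T' p q x] by blast
qed

lemma exchange_acyclic:
  assumes pq: "{p, q} \<in> T" and sep: "\<not> reach (T - {{p, q}}) a b"
  shows "acyclic_graph (insert {a, b} (T - {{p, q}}))"
  unfolding acyclic_graph_iff_reach
proof (intro allI impI notI)
  let ?F = "T - {{p, q}}"
  let ?T' = "insert {a, b} ?F"
  fix u v
  assume uv: "{u, v} \<in> ?T'" and cyc: "reach (?T' - {{u, v}}) u v"
  have abF: "{a, b} \<notin> ?F" using sep by (meson reach_edge)
  show False
  proof (cases "{u, v} = {a, b}")
    case True
    then have "?T' - {{u, v}} = ?F" using abF by auto
    then have "reach ?F u v" using cyc by simp
    moreover have "(u = a \<and> v = b) \<or> (u = b \<and> v = a)"
      using True by (auto simp: doubleton_eq_iff)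
    ultimately show False using sep by (meson reach_sym)
  next
    case False
    let ?G = "?F - {{u, v}}"
    have uvF: "{u, v} \<in> ?F" using uv False by simp
    have "?T' - {{u, v}} = insert {a, b} ?G" using False by auto
    then have "reach (insert {a, b} ?G) u v" using cyc by simp
    then have "reach ?G u v \<or> (reach ?G u a \<and> reach ?G b v) \<or> (reach ?G u b \<and> reach ?G a v)"
      by (rule reach_insert_edgeD)
    then consider "reach ?G u v" | "reach ?G u a" "reach ?G b v" | "reach ?G u b" "reach ?G a v"
      by blast
    then show False
    proof cases
      case 1
      then have "reach (T - {{u, v}}) u v" by (rule reach_mono[rotated]) blast
      then show False using bridge uvF by simp
    next
      case 2
      then have "reach ?F a u" "reach ?F v b"
        using reach_sym reach_mono[of ?G ?F] by (meson Diff_subset)+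
      then have "reach ?F a b" using reach_trans[OF reach_step[OF _ uvF]] by simp
      then show False using sep by simp
    next
      case 3
      then have "reach ?F b u" "reach ?F v a"
        using reach_sym reach_mono[of ?G ?F] by (meson Diff_subset)+
      then have "reach ?F b a" using reach_trans[OF reach_step[OF _ uvF]] by simp
      then show False using sep by (meson reach_sym)
    qed
  qed
qed

lemma tree_exchange:
  assumes pq: "{p, q} \<in> T" and ab: "a \<in> V" "b \<in> V"
    and sep: "\<not> reach (T - {{p, q}}) a b"
  shows "tree_on V (insert {a, b} (T - {{p, q}}))"
  unfolding tree_on_def is_tree_def
proof (intro conjI)
  have "a \<noteq> b" using sep by auto
  then show "simple_graph V (insert {a, b} (T - {{p, q}}))"
    using simple_graph ab unfolding simple_graph_def by blast
  have "reach (insert {a, b} (T - {{p, q}})) x y" if "x \<in> V" "y \<in> V" for x y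
    using reach_trans[OF reach_sym[OF exchange_reach[OF assms that(1)]] exchange_reach[OF assms that(2)]] .
  moreover have "V \<noteq> {}" using ab by blast
  ultimately show "connected_graph V (insert {a, b} (T - {{p, q}}))"
    by (simp add: connected_graph_iff_reach)
  show "acyclic_graph (insert {a, b} (T - {{p, q}}))" using exchange_acyclic[OF pq sep] .
qed

end

lemma spanning_tree_exists:
  assumes sg: "simple_graph V E" and conn: "connected_graph V E"
  shows "\<exists>T. spanning_tree V E T"
proof -
  have "finite E" using sg by (rule simple_graph_finite_edges)
  obtain F where F: "F \<subseteq> E" "connected_graph V F"
    and min: "\<And>G. G \<subseteq> E \<Longrightarrow> connected_graph V G \<Longrightarrow> card F \<le> card G"
    using ex_has_least_nat[of "\<lambda>G. G \<subseteq> E \<and> connected_graph V G" E card] conn by blast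
  have "simple_graph V F" using sg F(1) unfolding simple_graph_def by blast
  moreover have "acyclic_graph F"
    unfolding acyclic_graph_iff_reach
  proof (intro allI impI notI)
    fix u v
    assume uv: "{u, v} \<in> F" and cyc: "reach (F - {{u, v}}) u v"
    \<comment> \<open>deleting an edge on a cycle keeps F connected, contradicting minimality\<close>
    have "connected_graph V (F - {{u, v}})"
      using F(2) reach_Diff_edge[OF _ cyc] unfolding connected_graph_iff_reach by blast
    then have "card F \<le> card (F - {{u, v}})" using min F(1) by blast
    moreover have "finite F" using F(1) \<open>finite E\<close> finite_subset by blast
    ultimately show False using uv card_Diff1_less[of F "{u, v}"] by simp
  qed
  ultimately show ?thesis using F unfolding spanning_tree_def is_tree_def by blast
qed

section \<open>The number of leaves and branch vertices\<close>

definition lb_weight :: "nat \<Rightarrow> int" where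
  "lb_weight d = (if d = 1 \<or> 3 \<le> d then 1 else 0)"

definition cost :: "'a set \<Rightarrow> 'a set set \<Rightarrow> nat" where
  "cost V T = card (leaves V T) + card (branch_vertices V T)"

lemma lb_weight_simps [simp]:
  "lb_weight 0 = 0" "lb_weight (Suc 0) = 1" "lb_weight 2 = 0" "3 \<le> d \<Longrightarrow> lb_weight d = 1"
  by (auto simp: lb_weight_def)

lemma lb_weight_diff_le_1: "lb_weight d' - lb_weight d \<le> 1"
  by (auto simp: lb_weight_def)

lemma lb_weight_decrement_nonpos: "d \<noteq> 2 \<Longrightarrow> 1 \<le> d \<Longrightarrow> lb_weight (d - 1) - lb_weight d \<le> 0"
  by (auto simp: lb_weight_def)

lemma cost_eq_sum_lb_weight:
  assumes "finite V"
  shows "int (cost V T) = (\<Sum>x\<in>V. lb_weight (degree T x))"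
proof -
  have "int (cost V T) = (\<Sum>x\<in>V. if degree T x = 1 then 1 else 0) + (\<Sum>x\<in>V. if degree T x \<ge> 3 then 1 else 0)"
    unfolding cost_def leaves_def branch_vertices_def
    using sum.inter_filter[OF assms, of "\<lambda>x. 1::int"] by simp
  also have "\<dots> = (\<Sum>x\<in>V. lb_weight (degree T x))"
    unfolding sum.distrib[symmetric] by (rule sum.cong) (auto simp: lb_weight_def)
  finally show ?thesis .
qed

lemma cost_le_card:
  assumes "finite V"
  shows "cost V T \<le> card V"
proof -
  have "cost V T = card (leaves V T \<union> branch_vertices V T)"
    unfolding cost_def using assms
    by (intro card_Un_disjoint[symmetric]) (auto simp: leaves_def branch_vertices_def)
  also have "\<dots> \<le> card V"
    using assms by (intro card_mono) (auto simp: leaves_def branch_vertices_def)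
  finally show ?thesis .
qed

lemma degree_exchange:
  assumes fin: "finite (neighbours T x)" and pq: "{p, q} \<in> T" "p \<noteq> q"
    and ab: "{a, b} \<notin> T" "a \<noteq> b"
  shows "degree (insert {a, b} (T - {{p, q}})) x + (if x = p \<or> x = q then 1 else 0)
       = degree T x + (if x = a \<or> x = b then 1 else 0)"
proof -
  have pair: "{y. {x, y} = {c, d}} = (if x = c then {d} else if x = d then {c} else {})"
    if "c \<noteq> d" for c d
    using that by (auto simp: doubleton_eq_iff)
  let ?N = "neighbours T x"
  let ?A = "{y. {x, y} = {a, b}}"
  let ?D = "{y. {x, y} = {p, q}}"
  have N': "neighbours (insert {a, b} (T - {{p, q}})) x = ?A \<union> (?N - ?D)"
    unfolding neighbours_def by auto
  have DN: "?D \<subseteq> ?N" using pq unfolding neighbours_def by auto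
  have AN: "?A \<inter> ?N = {}" using ab unfolding neighbours_def by auto
  have cA: "card ?A = (if x = a \<or> x = b then 1 else 0)" using pair[OF ab(2)] ab(2) by auto
  have cD: "card ?D = (if x = p \<or> x = q then 1 else 0)" using pair[OF pq(2)] pq(2) by auto
  have "card (?A \<union> (?N - ?D)) = card ?A + card (?N - ?D)"
    by (rule card_Un_disjoint) (use pair[OF ab(2)] fin AN in auto)
  moreover have "card (?N - ?D) + card ?D = card ?N"
    using card_Diff_subset[OF finite_subset[OF DN fin] DN] card_mono[OF fin DN] by simp
  ultimately show ?thesis unfolding degree_def N' using cA cD by simp
qed

context tree_on
begin

lemma degree_pos:
  assumes "x \<in> V" "y \<in> V" "x \<noteq> y"
  shows "1 \<le> degree T x"
proof -
  obtain s where "{x, s} \<in> T" using reach_first_step[OF reach_all[OF assms(1,2)] assms(3)] by blast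
  then have "neighbours T x \<noteq> {}" by (auto simp: mem_neighbours_iff)
  then show ?thesis unfolding degree_def using finite_neighbours by (simp add: Suc_leI card_gt_0_iff)
qed

lemma degree_exchange_tree:
  assumes "{p, q} \<in> T" and "{a, b} \<notin> T" "a \<noteq> b"
  shows "degree (insert {a, b} (T - {{p, q}})) x + (if x = p \<or> x = q then 1 else 0)
       = degree T x + (if x = a \<or> x = b then 1 else 0)"
  using degree_exchange[OF finite_neighbours assms(1) edge_in_V(3)[OF assms(1)] assms(2,3)] .

text \<open>Only the four ends of the exchanged edges can change their weight.\<close>
lemma cost_exchange:
  assumes pq: "{p, q} \<in> T" and ab: "{a, b} \<notin> T" "a \<noteq> b" "a \<in> V" "b \<in> V"
  shows "int (cost V (insert {a, b} (T - {{p, q}}))) = int (cost V T)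
     + (\<Sum>x\<in>{a, b, p, q}. lb_weight (degree (insert {a, b} (T - {{p, q}})) x) - lb_weight (degree T x))"
proof -
  let ?T' = "insert {a, b} (T - {{p, q}})"
  have pqV: "p \<in> V" "q \<in> V" using edge_in_V[OF pq] by auto
  have "degree ?T' x = degree T x" if "x \<notin> {a, b, p, q}" for x
    using degree_exchange_tree[OF pq ab(1,2), of x] that by auto
  then have "(\<Sum>x\<in>V. lb_weight (degree ?T' x) - lb_weight (degree T x))
      = (\<Sum>x\<in>{a, b, p, q}. lb_weight (degree ?T' x) - lb_weight (degree T x))"
    using ab pqV by (intro sum.mono_neutral_right[OF finite_V]) auto
  then show ?thesis using cost_eq_sum_lb_weight[OF finite_V] by (simp add: sum_subtractf)
qed

end

definition min_cost_tree :: "'a set \<Rightarrow> 'a set set \<Rightarrow> 'a set set \<Rightarrow> bool" where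
  "min_cost_tree V E T \<longleftrightarrow>
     spanning_tree V E T \<and> (\<forall>T'. spanning_tree V E T' \<longrightarrow> cost V T \<le> cost V T')"

lemma min_cost_tree_exists:
  assumes "simple_graph V E" "connected_graph V E"
  shows "\<exists>T. min_cost_tree V E T"
proof -
  obtain T0 where "spanning_tree V E T0" using spanning_tree_exists[OF assms] by blast
  then show ?thesis unfolding min_cost_tree_def by (rule ex_has_least_nat)
qed

lemma min_cost_tree_tree_on: "min_cost_tree V E T \<Longrightarrow> tree_on V T"
  unfolding min_cost_tree_def spanning_tree_def tree_on_def by blast

lemma min_cost_tree_subset: "min_cost_tree V E T \<Longrightarrow> T \<subseteq> E"
  unfolding min_cost_tree_def spanning_tree_def by blast

lemma min_cost_tree_exchange:
  assumes sg: "simple_graph V E" and mc: "min_cost_tree V E T" and pq: "{p, q} \<in> T"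
    and ab: "{a, b} \<in> E" "{a, b} \<notin> T" and sep: "\<not> reach (T - {{p, q}}) a b"
  shows "0 \<le> (\<Sum>x\<in>{a, b, p, q}.
              lb_weight (degree (insert {a, b} (T - {{p, q}})) x) - lb_weight (degree T x))"
    and "(\<Sum>x\<in>{a, b, p, q}.
              lb_weight (degree (insert {a, b} (T - {{p, q}})) x) - lb_weight (degree T x)) \<le> 0
         \<Longrightarrow> min_cost_tree V E (insert {a, b} (T - {{p, q}}))"
proof -
  interpret tree_on V T using min_cost_tree_tree_on[OF mc] .
  let ?T' = "insert {a, b} (T - {{p, q}})"
  have abV: "a \<in> V" "b \<in> V" "a \<noteq> b" using simple_graph_edgeD[OF sg ab(1)] by auto
  have st': "spanning_tree V E ?T'"
    using tree_exchange[OF pq abV(1,2) sep] min_cost_tree_subset[OF mc] ab(1)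
    unfolding spanning_tree_def tree_on_def by blast
  have cost: "int (cost V ?T') = int (cost V T) + (\<Sum>x\<in>{a, b, p, q}.
              lb_weight (degree ?T' x) - lb_weight (degree T x))"
    using cost_exchange[OF pq ab(2) abV(3) abV(1,2)] .
  show "0 \<le> (\<Sum>x\<in>{a, b, p, q}. lb_weight (degree ?T' x) - lb_weight (degree T x))"
    using mc st' cost unfolding min_cost_tree_def by fastforce
  assume "(\<Sum>x\<in>{a, b, p, q}. lb_weight (degree ?T' x) - lb_weight (degree T x)) \<le> 0"
  then have "cost V ?T' \<le> cost V T" using cost by linarith
  then show "min_cost_tree V E ?T'"
    using mc st' unfolding min_cost_tree_def by (meson order_trans)
qed

section \<open>Sides of a tree edge\<close>

context tree_on
begin

lemma finite_side: "finite {x. reach (T - {{p, q}}) p x}"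
proof -
  have "{x. reach (T - {{p, q}}) p x} \<subseteq> insert p V"
  proof
    fix x assume "x \<in> {x. reach (T - {{p, q}}) p x}"
    then have r: "reach (T - {{p, q}}) p x" by simp
    show "x \<in> insert p V"
    proof (cases "x = p")
      case False
      then obtain s where "{p, s} \<in> T - {{p, q}}" using reach_first_step[OF r] by auto
      then have "p \<in> V" using edge_in_V by blast
      then show ?thesis using reach_in_V[OF r _ \<open>p \<in> V\<close>] by blast
    qed simp
  qed
  then show ?thesis using finite_V finite_subset by blast
qed

lemma side_through_neighbour:
  assumes pq: "{p, q} \<in> T" and pr: "{p, r} \<in> T" and rq: "r \<noteq> q"
    and rx: "reach (T - {{p, r}}) r x"
  shows "reach (T - {{p, q}}) p x"
proof -
  have "\<And>w. reach (T - {{p, r}}) r w \<Longrightarrow> w \<noteq> p" using bridge_rev[OF pr] by blast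
  then have "reach {f \<in> T - {{p, r}}. p \<notin> f} r x" by (rule reach_avoid[OF rx])
  then have "reach (T - {{p, q}}) r x" by (rule reach_mono[rotated]) blast
  moreover have "{p, r} \<in> T - {{p, q}}" using pr rq by (auto simp: doubleton_eq_iff)
  ultimately show ?thesis by (meson reach_edge reach_trans)
qed

lemma side_decompose:
  assumes pq: "{p, q} \<in> T" and px: "reach (T - {{p, q}}) p x" and "x \<noteq> p"
  shows "\<exists>r. {p, r} \<in> T \<and> r \<noteq> q \<and> reach (T - {{p, r}}) r x"
proof -
  obtain r where r1: "{p, r} \<in> T - {{p, q}}" and r2: "reach {f \<in> T - {{p, q}}. p \<notin> f} r x"
    using reach_first_step[OF px] assms(3) by auto
  from r2 have "reach (T - {{p, r}}) r x" by (rule reach_mono[rotated]) blast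
  then show ?thesis using r1 by auto
qed

lemma side_of_leaf:
  assumes pq: "{p, q} \<in> T" and "degree T p = 1" and px: "reach (T - {{p, q}}) p x"
  shows "x = p"
proof (rule ccontr)
  assume "x \<noteq> p"
  with side_decompose[OF pq px] obtain r where "{p, r} \<in> T" "r \<noteq> q" by blast
  then have "{q, r} \<subseteq> neighbours T p" "card {q, r} = 2"
    using pq by (auto simp: mem_neighbours_iff)
  then have "2 \<le> degree T p" unfolding degree_def by (metis card_mono finite_neighbours)
  then show False using assms(2) by simp
qed

lemma side_through_degree_2:
  assumes pq: "{p, q} \<in> T" and "degree T p = 2"
  obtains r where "{p, r} \<in> T" "r \<noteq> q"
    and "\<And>x. reach (T - {{p, q}}) p x \<longleftrightarrow> x = p \<or> reach (T - {{p, r}}) r x"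
proof -
  have "q \<in> neighbours T p" using pq by (simp add: mem_neighbours_iff)
  then have "card (neighbours T p - {q}) = 1"
    using assms(2) finite_neighbours unfolding degree_def by simp
  then obtain r where Nr: "neighbours T p - {q} = {r}" by (rule card_1_singletonE)
  then have "r \<in> neighbours T p - {q}" by simp
  then have pr: "{p, r} \<in> T" and rq: "r \<noteq> q" by (simp_all add: mem_neighbours_iff)
  have "reach (T - {{p, r}}) r x" if px: "reach (T - {{p, q}}) p x" "x \<noteq> p" for x
  proof -
    obtain r' where "{p, r'} \<in> T" "r' \<noteq> q" "reach (T - {{p, r'}}) r' x"
      using side_decompose[OF pq px] by blast
    moreover from this have "r' \<in> neighbours T p - {q}" by (simp add: mem_neighbours_iff)
    then have "r' = r" using Nr by simp
    ultimately show ?thesis by simp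
  qed
  then have "reach (T - {{p, q}}) p x \<longleftrightarrow> x = p \<or> reach (T - {{p, r}}) r x" for x
    using side_through_neighbour[OF pq pr rq, of x] by auto
  then show thesis by (rule that[OF pr rq])
qed

lemma side_unique_leaf:
  assumes "{p, q} \<in> T" and "\<And>x. reach (T - {{p, q}}) p x \<Longrightarrow> degree T x \<le> 2"
  shows "\<exists>l. reach (T - {{p, q}}) p l \<and> degree T l = 1 \<and>
       (\<forall>x. reach (T - {{p, q}}) p x \<longrightarrow> degree T x = 1 \<longrightarrow> x = l)"
  using assms
proof (induction "card {x. reach (T - {{p, q}}) p x}" arbitrary: p q rule: less_induct)
  case less
  note pq = less.prems(1)
  have "1 \<le> degree T p" using degree_pos edge_in_V[OF pq] by blast
  moreover have "degree T p \<le> 2" using less.prems(2) by simp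
  ultimately consider "degree T p = 1" | "degree T p = 2" by linarith
  then show ?case
  proof cases
    case 1
    then show ?thesis using side_of_leaf[OF pq 1] by (intro exI[of _ p]) auto
  next
    case 2
    obtain r where pr: "{p, r} \<in> T" and rq: "r \<noteq> q"
      and side: "\<And>x. reach (T - {{p, q}}) p x \<longleftrightarrow> x = p \<or> reach (T - {{p, r}}) r x"
      using side_through_degree_2[OF pq 2] by blast
    have rp: "{r, p} \<in> T" and eq: "T - {{r, p}} = T - {{p, r}}" using pr by (auto simp: insert_commute)
    have "{x. reach (T - {{p, r}}) r x} \<subset> {x. reach (T - {{p, q}}) p x}"
    proof (rule psubsetI)
      show "{x. reach (T - {{p, r}}) r x} \<subseteq> {x. reach (T - {{p, q}}) p x}" using side by blast
      show "{x. reach (T - {{p, r}}) r x} \<noteq> {x. reach (T - {{p, q}}) p x}"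
        using bridge_rev[OF pr] by auto
    qed
    then have "card {x. reach (T - {{r, p}}) r x} < card {x. reach (T - {{p, q}}) p x}"
      unfolding eq by (rule psubset_card_mono[OF finite_side])
    moreover have "degree T x \<le> 2" if "reach (T - {{r, p}}) r x" for x
      using less.prems(2) side that unfolding eq by blast
    ultimately obtain l where l: "reach (T - {{p, r}}) r l" "degree T l = 1"
      "\<forall>x. reach (T - {{p, r}}) r x \<longrightarrow> degree T x = 1 \<longrightarrow> x = l"
      using less.hyps[OF _ rp] unfolding eq by blast
    have "x = l" if "reach (T - {{p, q}}) p x" "degree T x = 1" for x
      using that side[of x] l(3) 2 by auto
    then show ?thesis using l(1,2) side by blast
  qed
qed

lemma card_leaves_le_2:
  assumes "\<forall>x\<in>V. degree T x \<le> 2"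
  shows "card (leaves V T) \<le> 2"
proof (cases "T = {}")
  case True
  then show ?thesis by (simp add: leaves_def degree_def neighbours_def)
next
  case False
  then obtain e where "e \<in> T" by blast
  moreover from this obtain p q where "e = {p, q}" using simple_graph unfolding simple_graph_def by blast
  ultimately have pq: "{p, q} \<in> T" by simp
  have qp: "{q, p} \<in> T" and eq: "T - {{q, p}} = T - {{p, q}}" using pq by (auto simp: insert_commute)
  have side_V: "x \<in> V" if "reach (T - {{p, q}}) y x" "y \<in> {p, q}" for x y
    using reach_in_V[OF that(1) Diff_subset] edge_in_V[OF pq] that(2) by blast
  obtain l1 where l1: "\<forall>x. reach (T - {{p, q}}) p x \<longrightarrow> degree T x = 1 \<longrightarrow> x = l1"
    using side_unique_leaf[OF pq] assms side_V by blast
  obtain l2 where l2: "\<forall>x. reach (T - {{p, q}}) q x \<longrightarrow> degree T x = 1 \<longrightarrow> x = l2"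
    using side_unique_leaf[OF qp] assms side_V unfolding eq by blast
  have "leaves V T \<subseteq> {l1, l2}"
    using cut_edge_sides[OF pq] l1 l2 unfolding leaves_def by blast
  then have "card (leaves V T) \<le> card {l1, l2}" by (rule card_mono[rotated]) simp
  also have "\<dots> \<le> 2" by (simp add: card_insert_if)
  finally show ?thesis .
qed

text \<open>Take a branch vertex z and an incident edge zc whose far side is as large as possible: then
  every other branch vertex lies on that side, so the remaining branches at z are paths.\<close>
lemma exists_end_branch:
  assumes "\<exists>z\<in>V. 3 \<le> degree T z"
  shows "\<exists>z c. z \<in> V \<and> 3 \<le> degree T z \<and> {z, c} \<in> T \<and>
     (\<forall>y\<in>V. 3 \<le> degree T y \<longrightarrow> y \<noteq> z \<longrightarrow> reach (T - {{z, c}}) c y)"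
proof -
  let ?P = "\<lambda>(z, c). z \<in> V \<and> 3 \<le> degree T z \<and> {z, c} \<in> T"
  let ?m = "\<lambda>(z, c). card {x. reach (T - {{z, c}}) z x}"
  obtain z0 where z0: "z0 \<in> V" "3 \<le> degree T z0" using assms by blast
  then have "neighbours T z0 \<noteq> {}" unfolding degree_def by auto
  then obtain c0 where "{z0, c0} \<in> T" by (auto simp: mem_neighbours_iff)
  then have "?P (z0, c0)" using z0 by simp
  then obtain z c where P: "?P (z, c)" and min: "\<And>y. ?P y \<Longrightarrow> ?m (z, c) \<le> ?m y"
    using ex_has_least_nat[of ?P "(z0, c0)" ?m] by auto
  have zV: "z \<in> V" and e: "{z, c} \<in> T" using P by auto
  have "reach (T - {{z, c}}) c y" if yV: "y \<in> V" and dy: "3 \<le> degree T y" and yz: "y \<noteq> z" for y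
  proof (rule ccontr)
    assume "\<not> reach (T - {{z, c}}) c y"
    then have zy: "reach (T - {{z, c}}) z y" using cut_edge_sides[OF e yV] by blast
    let ?t = "toward y z"
    have yt: "{y, ?t} \<in> T" and nyz: "\<not> reach (T - {{y, ?t}}) y z" using toward[OF yV zV yz] by auto
    let ?A = "{x. reach (T - {{y, ?t}}) y x}"
    let ?B = "{x. reach (T - {{z, c}}) z x}"
    have "?A \<subseteq> ?B"
    proof
      fix x assume "x \<in> ?A"
      then have "reach (T - {{y, ?t}}) y x" by simp
      moreover have "\<And>w. reach (T - {{y, ?t}}) y w \<Longrightarrow> w \<noteq> z" using nyz by blast
      ultimately have "reach {f \<in> T - {{y, ?t}}. z \<notin> f} y x" by (rule reach_avoid)
      then have "reach (T - {{z, c}}) y x" by (rule reach_mono[rotated]) blast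
      then show "x \<in> ?B" using reach_trans[OF zy] by simp
    qed
    moreover have "z \<in> ?B" "z \<notin> ?A" using nyz by auto
    ultimately have "?A \<subset> ?B" by blast
    then have "card ?A < card ?B" by (rule psubset_card_mono[OF finite_side])
    moreover have "?m (z, c) \<le> ?m (y, ?t)" using min[of "(y, ?t)"] yV dy yt by simp
    ultimately show False by simp
  qed
  then show ?thesis using P by auto
qed

lemma card_V_eq_cost_plus_degree_2:
  assumes "\<forall>x\<in>V. 1 \<le> degree T x"
  shows "card V = cost V T + card {x \<in> V. degree T x = 2}"
proof -
  let ?D2 = "{x \<in> V. degree T x = 2}"
  have "V = (leaves V T \<union> branch_vertices V T) \<union> ?D2"
    using assms unfolding leaves_def branch_vertices_def by force
  moreover have "(leaves V T \<union> branch_vertices V T) \<inter> ?D2 = {}"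
    unfolding leaves_def branch_vertices_def by auto
  ultimately have "card V = card (leaves V T \<union> branch_vertices V T) + card ?D2"
    using finite_V by (metis card_Un_disjoint finite_Un finite_subset sup_ge1 sup_ge2)
  also have "card (leaves V T \<union> branch_vertices V T) = cost V T"
    unfolding cost_def using finite_V
    by (intro card_Un_disjoint) (auto simp: leaves_def branch_vertices_def)
  finally show ?thesis .
qed

end

section \<open>Edge exchanges in minimum-cost trees\<close>

context tree_on
begin

lemma separated_not_edge:
  assumes "\<not> reach (T - {{p, q}}) a b" and "{a, b} \<noteq> {p, q}"
  shows "{a, b} \<notin> T"
  using assms reach_edge[of a b "T - {{p, q}}"] by blast

lemma branch_separation:
  assumes zc: "{z, c} \<in> T" and ncv: "\<not> reach (del_vertex T z) c v"
    and cx: "reach (T - {{z, c}}) c x"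
  shows "\<not> reach (T - {{z, c}}) v x"
proof
  assume "reach (T - {{z, c}}) v x"
  then have "reach (T - {{z, c}}) c v" by (rule reach_trans[OF cx reach_sym])
  then show False using ncv reach_del_vertex_iff[OF zc] by blast
qed

lemma toward_separation:
  assumes z: "z \<in> V" and s: "s \<in> V" "s \<noteq> z" and sep: "\<not> reach (del_vertex T z) v s"
  shows "{z, toward z s} \<in> T" "v \<noteq> toward z s" "\<not> reach (T - {{z, toward z s}}) v s"
proof -
  let ?r = "toward z s"
  show zr: "{z, ?r} \<in> T" using toward(1)[OF z s(1) s(2)[symmetric]] .
  have rs: "reach (T - {{z, ?r}}) ?r s" using toward_side[OF z s(1) s(2)[symmetric]] .
  have nrv: "\<not> reach (del_vertex T z) ?r v"
  proof
    assume "reach (del_vertex T z) ?r v"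
    moreover have "reach (del_vertex T z) ?r s" using rs reach_del_vertex_iff[OF zr] by simp
    ultimately have "reach (del_vertex T z) v s" by (rule reach_trans[OF reach_sym])
    then show False using sep by simp
  qed
  then show "v \<noteq> ?r" by auto
  show "\<not> reach (T - {{z, ?r}}) v s" using branch_separation[OF zr nrv rs] .
qed

end

lemma leaves_in_different_branches_nonadjacent:
  assumes sg: "simple_graph V E" and mc: "min_cost_tree V E T"
    and v: "degree T v = 1" and z: "z \<in> V" "3 \<le> degree T z"
    and s: "s \<in> V" "degree T s = 1" and sep: "\<not> reach (del_vertex T z) v s"
  shows "{v, s} \<notin> E"
proof
  assume vs: "{v, s} \<in> E"
  interpret tree_on V T using min_cost_tree_tree_on[OF mc] .
  have vz: "v \<noteq> z" and sz: "s \<noteq> z" using v s(2) z(2) by auto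
  define r where "r = toward z s"
  have zr: "{z, r} \<in> T" and vr: "v \<noteq> r" and sep': "\<not> reach (T - {{z, r}}) v s"
    using toward_separation[OF z(1) s(1) sz sep] unfolding r_def by auto
  have vsT: "{v, s} \<notin> T"
    using separated_not_edge[OF sep'] vz vr by (auto simp: doubleton_eq_iff)
  let ?T' = "insert {v, s} (T - {{z, r}})"
  let ?\<delta> = "\<lambda>x. lb_weight (degree ?T' x) - lb_weight (degree T x)"
  have gain: "0 \<le> (\<Sum>x\<in>{v, s, z, r}. ?\<delta> x)"
    using min_cost_tree_exchange(1)[OF sg mc zr vs vsT sep'] .
  have vs_ne: "v \<noteq> s" and zr_ne: "z \<noteq> r" using sep' edge_in_V(3)[OF zr] by auto
  have dg: "degree ?T' x + (if x = z \<or> x = r then 1 else 0) = degree T x + (if x = v \<or> x = s then 1 else 0)" for x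
    using degree_exchange_tree[OF zr vsT vs_ne] .
  have \<delta>v: "?\<delta> v = -1" using dg[of v] v vz vr by (simp add: lb_weight_def)
  have \<delta>z: "?\<delta> z \<le> 0" using dg[of z] vz sz z(2) by (simp add: lb_weight_def)
  show False
  proof (cases "s = r")
    case True
    have "?\<delta> s = 0" using dg[of s] True by simp
    then have "(\<Sum>x\<in>{v, s, z, r}. ?\<delta> x) \<le> -1"
      using True vs_ne vz sz \<delta>v \<delta>z by (simp add: insert_commute)
    then show False using gain by linarith
  next
    case False
    have "?\<delta> s = -1" using dg[of s] False sz s(2) by (simp add: lb_weight_def)
    moreover have "?\<delta> r \<le> 1" by (rule lb_weight_diff_le_1)
    ultimately have "(\<Sum>x\<in>{v, s, z, r}. ?\<delta> x) \<le> -1"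
      using False vs_ne vz sz vr zr_ne \<delta>v \<delta>z by simp
    then show False using gain by linarith
  qed
qed

lemma leaf_chord_exchange:
  assumes sg: "simple_graph V E" and mc: "min_cost_tree V E T"
    and u: "degree T u = 1" and uw: "{u, w} \<in> E" "{u, w} \<notin> T"
    and ws: "{w, s} \<in> T" and nws: "\<not> reach (T - {{w, s}}) w u"
  shows "degree T s = 2" "s \<noteq> u" "min_cost_tree V E (insert {u, w} (T - {{w, s}}))"
proof -
  interpret tree_on V T using min_cost_tree_tree_on[OF mc] .
  have uw_ne: "u \<noteq> w" using simple_graph_edgeD[OF sg uw(1)] by simp
  show su: "s \<noteq> u" using uw(2) ws by (auto simp: insert_commute)
  have ws_ne: "w \<noteq> s" and sV: "s \<in> V" and wV: "w \<in> V" using edge_in_V[OF ws] by auto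
  have sep: "\<not> reach (T - {{w, s}}) u w" using nws by (meson reach_sym)
  let ?T' = "insert {u, w} (T - {{w, s}})"
  let ?\<delta> = "\<lambda>x. lb_weight (degree ?T' x) - lb_weight (degree T x)"
  have dg: "degree ?T' x + (if x = w \<or> x = s then 1 else 0) = degree T x + (if x = u \<or> x = w then 1 else 0)" for x
    using degree_exchange_tree[OF ws uw(2) uw_ne] .
  have sum: "(\<Sum>x\<in>{u, w, w, s}. ?\<delta> x) = ?\<delta> s - 1"
    using dg[of u] dg[of w] u uw_ne su ws_ne by (simp add: lb_weight_def)
  have ds: "degree ?T' s = degree T s - 1" and "1 \<le> degree T s"
    using dg[of s] su ws_ne degree_pos[OF sV wV ws_ne[symmetric]] by auto
  show d2: "degree T s = 2"
  proof (rule ccontr)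
    assume "degree T s \<noteq> 2"
    then have "?\<delta> s \<le> 0" using ds \<open>1 \<le> degree T s\<close> lb_weight_decrement_nonpos by simp
    then show False using min_cost_tree_exchange(1)[OF sg mc ws uw sep] sum by linarith
  qed
  have "?\<delta> s = 1" using ds d2 by (simp add: lb_weight_def)
  then show "min_cost_tree V E ?T'" using min_cost_tree_exchange(2)[OF sg mc ws uw sep] sum by simp
qed

lemma leaf_to_branch_exchange:
  assumes sg: "simple_graph V E" and mc: "min_cost_tree V E T"
    and v: "degree T v = 1" and z: "3 \<le> degree T z" and zc: "{z, c} \<in> T"
    and x: "3 \<le> degree T x" "x \<noteq> z" and vx: "{v, x} \<in> E"
    and cx: "reach (T - {{z, c}}) c x" and ncv: "\<not> reach (del_vertex T z) c v"
  shows "4 \<le> degree T z" "min_cost_tree V E (insert {v, x} (T - {{z, c}}))"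
    "degree (insert {v, x} (T - {{z, c}})) z + 1 = degree T z"
    "\<And>y. 3 \<le> degree (insert {v, x} (T - {{z, c}})) y \<Longrightarrow> 3 \<le> degree T y"
proof -
  interpret tree_on V T using min_cost_tree_tree_on[OF mc] .
  have vz: "v \<noteq> z" using v z by auto
  have vc: "v \<noteq> c" using ncv by auto
  have sep: "\<not> reach (T - {{z, c}}) v x" using branch_separation[OF zc ncv cx] .
  have vxT: "{v, x} \<notin> T"
    using separated_not_edge[OF sep] vz vc by (auto simp: doubleton_eq_iff)
  have vx_ne: "v \<noteq> x" and zc_ne: "z \<noteq> c" using sep edge_in_V(3)[OF zc] by auto
  let ?T' = "insert {v, x} (T - {{z, c}})"
  let ?\<delta> = "\<lambda>y. lb_weight (degree ?T' y) - lb_weight (degree T y)"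
  have dg: "degree ?T' y + (if y = z \<or> y = c then 1 else 0) = degree T y + (if y = v \<or> y = x then 1 else 0)" for y
    using degree_exchange_tree[OF zc vxT vx_ne] .
  have gain: "0 \<le> (\<Sum>y\<in>{v, x, z, c}. ?\<delta> y)"
    using min_cost_tree_exchange(1)[OF sg mc zc vx vxT sep] .
  have \<delta>v: "?\<delta> v = -1" using dg[of v] v vz vc by (simp add: lb_weight_def)
  have dz: "degree ?T' z = degree T z - 1" using dg[of z] vz x(2) by simp
  then show "degree ?T' z + 1 = degree T z" using z by simp
  have xc: "x \<noteq> c"
  proof
    assume xc: "x = c"
    have "?\<delta> x = 0" using dg[of x] xc by simp
    moreover have "?\<delta> z \<le> 0" using dz z by (simp add: lb_weight_def)
    ultimately have "(\<Sum>y\<in>{v, x, z, c}. ?\<delta> y) \<le> -1"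
      using xc vx_ne vz x(2) \<delta>v by (simp add: insert_commute)
    then show False using gain by linarith
  qed
  have "?\<delta> x = 0" using dg[of x] xc x by (simp add: lb_weight_def)
  moreover have "?\<delta> c \<le> 1" by (rule lb_weight_diff_le_1)
  ultimately have sum: "(\<Sum>y\<in>{v, x, z, c}. ?\<delta> y) \<le> ?\<delta> z"
    using xc vx_ne vz x(2) vc zc_ne \<delta>v by simp
  show z4: "4 \<le> degree T z"
  proof (rule ccontr)
    assume "\<not> 4 \<le> degree T z"
    then have "degree T z = 3" using z by simp
    then have "?\<delta> z = -1" using dz by (simp add: lb_weight_def)
    then show False using sum gain by linarith
  qed
  have "3 \<le> degree ?T' z" using dz z4 by simp
  then have "?\<delta> z = 0" using z by simp
  then show "min_cost_tree V E ?T'"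
    using min_cost_tree_exchange(2)[OF sg mc zc vx vxT sep] sum by linarith
  show "3 \<le> degree T y" if "3 \<le> degree ?T' y" for y
    using dg[of y] that dg[of v] v x(1) by (auto split: if_splits)
qed

section \<open>Legs at an end branch vertex\<close>

text \<open>All branch vertices other than z lie behind c, so the remaining branches at z are paths,
  the legs of z.\<close>
definition end_branch_config :: "'a set \<Rightarrow> 'a set set \<Rightarrow> 'a set set \<Rightarrow> 'a \<Rightarrow> 'a \<Rightarrow> bool" where
  "end_branch_config V E T z c \<longleftrightarrow> min_cost_tree V E T \<and> z \<in> V \<and> 3 \<le> degree T z \<and> {z, c} \<in> T \<and>
     (\<forall>y\<in>V. 3 \<le> degree T y \<longrightarrow> y \<noteq> z \<longrightarrow> reach (T - {{z, c}}) c y)"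

lemma end_branch_config_leg_degree_le_2:
  assumes cf: "end_branch_config V E T z c" and zc': "{z, c'} \<in> T" and "c' \<noteq> c"
    and c'x: "reach (del_vertex T z) c' x"
  shows "degree T x \<le> 2"
proof (rule ccontr)
  assume "\<not> degree T x \<le> 2"
  have mc: "min_cost_tree V E T" and zc: "{z, c} \<in> T"
    and branch_behind_c: "\<And>y. y \<in> V \<Longrightarrow> 3 \<le> degree T y \<Longrightarrow> y \<noteq> z \<Longrightarrow> reach (T - {{z, c}}) c y"
    using cf unfolding end_branch_config_def by blast+
  interpret tree_on V T using min_cost_tree_tree_on[OF mc] .
  have "x \<in> V"
    using reach_in_V[OF c'x _ edge_in_V(2)[OF zc']] by (auto simp: del_vertex_def)
  moreover have "x \<noteq> z"
    using c'x bridge_rev[OF zc'] reach_del_vertex_iff[OF zc'] by blast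
  ultimately have "reach (T - {{z, c}}) c x" using branch_behind_c \<open>\<not> degree T x \<le> 2\<close> by simp
  then have "reach (del_vertex T z) c x" using reach_del_vertex_iff[OF zc] by blast
  then show False using del_vertex_branches_disjoint[OF zc zc' \<open>c' \<noteq> c\<close>[symmetric]] c'x by blast
qed

lemma end_branch_config_leg_leaf:
  assumes cf: "end_branch_config V E T z c" and zc': "{z, c'} \<in> T" and c'c: "c' \<noteq> c"
  shows "\<exists>l. reach (del_vertex T z) c' l \<and> degree T l = 1 \<and>
    (\<forall>x. reach (del_vertex T z) c' x \<longrightarrow> degree T x = 1 \<longrightarrow> x = l)"
proof -
  have mc: "min_cost_tree V E T" using cf unfolding end_branch_config_def by blast
  interpret tree_on V T using min_cost_tree_tree_on[OF mc] .
  have c'z: "{c', z} \<in> T" and eq: "T - {{c', z}} = T - {{z, c'}}" using zc' by (auto simp: insert_commute)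
  have side: "reach (T - {{c', z}}) c' x \<longleftrightarrow> reach (del_vertex T z) c' x" for x
    using reach_del_vertex_iff[OF zc'] eq by simp
  show ?thesis
    using side_unique_leaf[OF c'z] end_branch_config_leg_degree_le_2[OF cf zc' c'c] unfolding side by blast
qed

locale extremal_legs = tree_on V T
  for V :: "'a set" and T :: "'a set set" +
  fixes E :: "'a set set" and z c c1 c2 u v :: 'a
  assumes sg: "simple_graph V E"
    and cf: "end_branch_config V E T z c"
    and min_degree: "\<And>T' c'. end_branch_config V E T' z c' \<Longrightarrow> degree T z \<le> degree T' z"
    and zc1: "{z, c1} \<in> T" and c1c: "c1 \<noteq> c" and zc2: "{z, c2} \<in> T" and c12: "c1 \<noteq> c2"
    and v_leg: "reach (del_vertex T z) c1 v" "degree T v = 1"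
    and v_unique: "\<And>x. reach (del_vertex T z) c1 x \<Longrightarrow> degree T x = 1 \<Longrightarrow> x = v"
    and u_leg: "reach (del_vertex T z) c2 u" "degree T u = 1"
begin

lemma mc: "min_cost_tree V E T"
  and zV: "z \<in> V" and dz: "3 \<le> degree T z" and zc: "{z, c} \<in> T"
  and branch_behind_c: "\<And>y. y \<in> V \<Longrightarrow> 3 \<le> degree T y \<Longrightarrow> y \<noteq> z \<Longrightarrow> reach (T - {{z, c}}) c y"
  using cf unfolding end_branch_config_def by blast+

lemma vV: "v \<in> V" and uV: "u \<in> V"
  using reach_in_V[OF v_leg(1) _ edge_in_V(2)[OF zc1]] reach_in_V[OF u_leg(1) _ edge_in_V(2)[OF zc2]]
  by (auto simp: del_vertex_def)

lemma vz: "v \<noteq> z" and uz: "u \<noteq> z"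
  using v_leg(2) u_leg(2) dz by auto

lemma legs_disjoint: "reach (del_vertex T z) c1 x \<Longrightarrow> reach (del_vertex T z) c2 x \<Longrightarrow> False"
  using del_vertex_branches_disjoint[OF zc1 zc2 c12] by blast

lemma uv: "u \<noteq> v"
  using legs_disjoint v_leg(1) u_leg(1) by blast

lemma E_edge: "{x, y} \<in> E \<Longrightarrow> x \<in> V \<and> y \<in> V \<and> x \<noteq> y"
  using simple_graph_edgeD[OF sg] by blast

lemma v_nbr_not_leaf:
  assumes "{v, x} \<in> E"
  shows "degree T x \<noteq> 1"
proof
  assume dx: "degree T x = 1"
  then have "\<not> reach (del_vertex T z) c1 x" using v_unique E_edge[OF assms] by blast
  then have "\<not> reach (del_vertex T z) v x" using reach_trans[OF v_leg(1)] by blast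
  then show False
    using leaves_in_different_branches_nonadjacent[OF sg mc v_leg(2) zV dz _ dx] E_edge[OF assms] assms
    by blast
qed

lemma u_v_nonadjacent: "{u, v} \<notin> E"
  using v_nbr_not_leaf[of u] u_leg(2) by (auto simp: insert_commute)

text \<open>Otherwise rerouting zc to vx yields an end-branch configuration in which z has smaller degree.\<close>
lemma v_nbr_branch_eq_z:
  assumes vx: "{v, x} \<in> E" and dx: "3 \<le> degree T x"
  shows "x = z"
proof (rule ccontr)
  assume xz: "x \<noteq> z"
  have xV: "x \<in> V" using E_edge[OF vx] by blast
  have cx: "reach (T - {{z, c}}) c x" using branch_behind_c[OF xV dx xz] .
  have ncv: "\<not> reach (del_vertex T z) c v"
    using del_vertex_branches_disjoint[OF zc zc1 c1c[symmetric]] v_leg(1) by blast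
  let ?T1 = "insert {v, x} (T - {{z, c}})"
  note ex = leaf_to_branch_exchange[OF sg mc v_leg(2) dz zc dx xz vx cx ncv]
  have "end_branch_config V E ?T1 z c1"
    unfolding end_branch_config_def
  proof (intro conjI ballI impI)
    show "min_cost_tree V E ?T1" using ex(2) .
    show "z \<in> V" using zV .
    show "3 \<le> degree ?T1 z" using ex(1) ex(3) by simp
    show "{z, c1} \<in> ?T1" using zc1 c1c by (auto simp: doubleton_eq_iff)
  next
    fix y assume yV: "y \<in> V" and dy: "3 \<le> degree ?T1 y" and yz: "y \<noteq> z"
    have sub: "del_vertex T z \<subseteq> ?T1 - {{z, c1}}" unfolding del_vertex_def by auto
    have cy: "reach (del_vertex T z) c y" and cx': "reach (del_vertex T z) c x"
      using reach_del_vertex_iff[OF zc] branch_behind_c[OF yV ex(4)[OF dy] yz] cx by simp_all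
    have "reach (?T1 - {{z, c1}}) x c" using reach_mono[OF sub reach_sym[OF cx']] .
    moreover have "reach (?T1 - {{z, c1}}) c y" using reach_mono[OF sub cy] .
    moreover have "reach (?T1 - {{z, c1}}) c1 v" using reach_mono[OF sub v_leg(1)] .
    moreover have "{v, x} \<in> ?T1 - {{z, c1}}" using vz xz by (auto simp: doubleton_eq_iff)
    ultimately show "reach (?T1 - {{z, c1}}) c1 y"
      by (meson reach_step reach_trans)
  qed
  then show False using min_degree ex(3) by fastforce
qed

lemma v_leg_far_side:
  assumes c1w: "reach (del_vertex T z) c1 w" and ws: "{w, s} \<in> T"
    and nwz: "\<not> reach (T - {{w, s}}) w z"
  shows "reach (T - {{w, s}}) w v"
proof -
  have in_leg: "reach (del_vertex T z) c1 x" if wx: "reach (T - {{w, s}}) w x" for x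
  proof -
    have "\<And>y. reach (T - {{w, s}}) w y \<Longrightarrow> y \<noteq> z" using nwz by blast
    then have "reach {f \<in> T - {{w, s}}. z \<notin> f} w x" by (rule reach_avoid[OF wx])
    then have "reach (del_vertex T z) w x" by (rule reach_mono[rotated]) (auto simp: del_vertex_def)
    then show ?thesis by (rule reach_trans[OF c1w])
  qed
  have "degree T x \<le> 2" if "reach (T - {{w, s}}) w x" for x
    using end_branch_config_leg_degree_le_2[OF cf zc1 c1c in_leg[OF that]] .
  then obtain l where "reach (T - {{w, s}}) w l" "degree T l = 1"
    using side_unique_leaf[OF ws] by blast
  moreover from this have "l = v" using v_unique in_leg by blast
  ultimately show ?thesis by simp
qed

lemma u_leg_reaches_z:
  assumes c1w: "reach (del_vertex T z) c1 w" and wz: "w \<noteq> z"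
  shows "reach (T - {{w, s}}) z u"
proof -
  have "\<And>y. reach (del_vertex T z) c2 y \<Longrightarrow> y \<noteq> w" using legs_disjoint c1w by blast
  then have "reach {f \<in> del_vertex T z. w \<notin> f} c2 u" by (rule reach_avoid[OF u_leg(1)])
  then have "reach (T - {{w, s}}) c2 u" by (rule reach_mono[rotated]) (auto simp: del_vertex_def)
  moreover have "w \<noteq> c2" using legs_disjoint[of w] c1w by auto
  then have "{z, c2} \<in> T - {{w, s}}" using zc2 wz by (auto simp: doubleton_eq_iff)
  ultimately show ?thesis by (meson reach_edge reach_trans)
qed

lemma toward_z_u: "toward z u = c2"
proof (rule toward_unique[OF zV uV uz[symmetric] zc2], rule notI)
  assume "reach (T - {{z, c2}}) z u"
  moreover have "reach (T - {{z, c2}}) c2 u" using u_leg(1) reach_del_vertex_iff[OF zc2] by simp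
  ultimately have "reach (T - {{z, c2}}) z c2" by (rule reach_trans[OF _ reach_sym])
  then show False using bridge[OF zc2] by simp
qed

lemma v_leg_edge_not_bypassed:
  assumes ws: "{w, s} \<in> T" and nws: "\<not> reach (T - {{w, s}}) w u" and wz: "w \<noteq> z" and sz: "s \<noteq> z"
    and vs: "reach (del_vertex T z - {{w, s}}) v s"
  shows False
proof -
  have "reach (del_vertex T z) c1 s" using reach_trans[OF v_leg(1) reach_mono[OF _ vs]] by blast
  moreover have "{s, w} \<in> del_vertex T z" using ws wz sz by (auto simp: del_vertex_def insert_commute)
  ultimately have c1w: "reach (del_vertex T z) c1 w" by (rule reach_step)
  have "\<not> reach (T - {{w, s}}) w z"
  proof
    assume "reach (T - {{w, s}}) w z"
    then have "reach (T - {{w, s}}) w u" by (rule reach_trans[OF _ u_leg_reaches_z[OF c1w wz]])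
    then show False using nws by simp
  qed
  then have "reach (T - {{w, s}}) w v" by (rule v_leg_far_side[OF c1w ws])
  then have "reach (T - {{w, s}}) w s"
    by (rule reach_trans[OF _ reach_mono[OF _ vs]]) (auto simp: del_vertex_def)
  then show False using bridge[OF ws] by simp
qed

lemma chord_exchange_separates:
  assumes ws: "{w, s} \<in> T" and nws: "\<not> reach (T - {{w, s}}) w u" and sz: "s \<noteq> z"
  shows "\<not> reach (del_vertex (insert {u, w} (T - {{w, s}})) z) v s"
proof
  let ?T2 = "insert {u, w} (T - {{w, s}})"
  assume vs: "reach (del_vertex ?T2 z) v s"
  show False
  proof (cases "w = z")
    case True
    then have "s = c2" using toward_unique[OF zV uV uz[symmetric]] ws nws toward_z_u by simp
    moreover have "del_vertex ?T2 z = del_vertex T z" using True unfolding del_vertex_def by auto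
    ultimately have "reach (del_vertex T z) c1 c2" using vs reach_trans[OF v_leg(1)] by simp
    then show False using legs_disjoint[of c2] by simp
  next
    case False
    let ?F = "del_vertex T z - {{w, s}}"
    have F: "?F \<subseteq> del_vertex T z" by blast
    have wsF: "{s, w} \<in> del_vertex T z" using ws False sz by (auto simp: del_vertex_def insert_commute)
    have "del_vertex ?T2 z \<subseteq> insert {u, w} ?F" unfolding del_vertex_def by blast
    then have "reach (insert {u, w} ?F) v s" using vs by (rule reach_mono)
    then have "reach ?F v s \<or> (reach ?F v u \<and> reach ?F w s) \<or> (reach ?F v w \<and> reach ?F u s)"
      by (rule reach_insert_edgeD)
    then consider "reach ?F v s" | "reach ?F v u" | "reach ?F v w" "reach ?F u s" by blast
    then show False
    proof cases
      case 1
      then show False by (rule v_leg_edge_not_bypassed[OF ws nws False sz])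
    next
      case 2
      have "reach (del_vertex T z) c1 u" using reach_trans[OF v_leg(1) reach_mono[OF F 2]] .
      then show False using legs_disjoint u_leg(1) by blast
    next
      case 3
      have "reach (del_vertex T z) c1 w" using reach_trans[OF v_leg(1) reach_mono[OF F 3(1)]] .
      moreover have "reach (del_vertex T z) c2 s" using reach_trans[OF u_leg(1) reach_mono[OF F 3(2)]] .
      then have "reach (del_vertex T z) c2 w" by (rule reach_step[OF _ wsF])
      ultimately show False using legs_disjoint by blast
    qed
  qed
qed

lemma toward_u_of_chord:
  assumes uw: "{u, w} \<in> E" "{u, w} \<notin> T"
  shows "degree T (toward w u) = 2" "{v, toward w u} \<notin> E"
proof -
  have wV: "w \<in> V" and wu: "w \<noteq> u" using E_edge[OF uw(1)] by auto
  define s where "s = toward w u"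
  have ws: "{w, s} \<in> T" and nws: "\<not> reach (T - {{w, s}}) w u"
    using toward[OF wV uV wu] unfolding s_def by auto
  note ex = leaf_chord_exchange[OF sg mc u_leg(2) uw ws nws]
  show ds: "degree T (toward w u) = 2" using ex(1) unfolding s_def .
  let ?T2 = "insert {u, w} (T - {{w, s}})"
  have ws_ne: "w \<noteq> s" and sV: "s \<in> V" using edge_in_V[OF ws] by auto
  have sz: "s \<noteq> z" and vs: "v \<noteq> s" using ds dz v_leg(2) unfolding s_def by auto
  have vw: "v \<noteq> w" using uw(1) u_v_nonadjacent by auto
  have dg: "degree ?T2 x + (if x = w \<or> x = s then 1 else 0) = degree T x + (if x = u \<or> x = w then 1 else 0)" for x
    using degree_exchange_tree[OF ws uw(2) wu[symmetric]] .
  have "degree ?T2 v = 1" using dg[of v] v_leg(2) vw vs uv by auto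
  moreover have "degree ?T2 s = 1" using dg[of s] ds ex(2) ws_ne unfolding s_def by auto
  moreover have "3 \<le> degree ?T2 z" using dg[of z] dz uz sz by (cases "z = w") auto
  ultimately show "{v, toward w u} \<notin> E"
    using leaves_in_different_branches_nonadjacent[OF sg ex(3) _ zV _ sV]
      chord_exchange_separates[OF ws nws sz] unfolding s_def by blast
qed

lemma chord_at_u:
  assumes "neighbours T u = {u'}" and "w \<in> neighbours E u - {u'}"
  shows "{u, w} \<in> E" "{u, w} \<notin> T" "w \<in> V" "w \<noteq> u"
proof -
  show uw: "{u, w} \<in> E" using assms(2) by (simp add: mem_neighbours_iff)
  have "w \<notin> neighbours T u" using assms by simp
  then show "{u, w} \<notin> T" by (simp add: mem_neighbours_iff)
  show "w \<in> V" "w \<noteq> u" using E_edge[OF uw] by auto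
qed

lemma toward_u_inj_on:
  assumes nb: "neighbours T u = {u'}"
  shows "inj_on (\<lambda>w. toward w u) (neighbours E u - {u'})"
proof (rule inj_onI, rule ccontr)
  fix w1 w2
  assume w1: "w1 \<in> neighbours E u - {u'}" and w2: "w2 \<in> neighbours E u - {u'}"
    and eq: "toward w1 u = toward w2 u" and ne: "w1 \<noteq> w2"
  define s where "s = toward w1 u"
  have s1: "{w1, s} \<in> T" "\<not> reach (T - {{w1, s}}) w1 u" and ds: "degree T s = 2"
    using toward[OF chord_at_u(3)[OF nb w1] uV chord_at_u(4)[OF nb w1]] toward_u_of_chord(1)[OF chord_at_u(1,2)[OF nb w1]]
    unfolding s_def by auto
  have s2: "{w2, s} \<in> T" "\<not> reach (T - {{w2, s}}) w2 u"
    using toward[OF chord_at_u(3)[OF nb w2] uV chord_at_u(4)[OF nb w2]] eq unfolding s_def by auto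
  have sV: "s \<in> V" and su: "s \<noteq> u" using edge_in_V[OF s1(1)] ds u_leg(2) by auto
  define t where "t = toward s u"
  have st: "{s, t} \<in> T" and nst: "\<not> reach (T - {{s, t}}) s u"
    using toward[OF sV uV su] unfolding t_def by auto
  \<comment> \<open>u lies on one side of each tree edge, so the path from s to u does not go back to w1 or w2\<close>
  have t_ne: "t \<noteq> w" if ws: "{w, s} \<in> T" "\<not> reach (T - {{w, s}}) w u" for w
  proof
    assume "t = w"
    then have "\<not> reach (T - {{w, s}}) s u" using nst by (simp add: insert_commute)
    then show False using cut_edge_sides[OF ws(1) uV] ws(2) by blast
  qed
  have "{w1, w2, t} \<subseteq> neighbours T s"
    using s1(1) s2(1) st by (simp add: mem_neighbours_iff insert_commute)
  moreover have "card {w1, w2, t} = 3" using ne t_ne[OF s1] t_ne[OF s2] by simp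
  ultimately have "3 \<le> degree T s" unfolding degree_def by (metis card_mono finite_neighbours)
  then show False using ds by simp
qed

lemma degree_E_u:
  assumes nb: "neighbours T u = {u'}"
  shows "degree E u = card (neighbours E u - {u'}) + 1"
proof -
  have fin: "finite (neighbours E u)" using sg by (rule simple_graph_finite_neighbours)
  have "{u, u'} \<in> T" using nb mem_neighbours_iff[of u' T u] by simp
  then have "u' \<in> neighbours E u" using min_cost_tree_subset[OF mc] by (auto simp: mem_neighbours_iff)
  then have "card (neighbours E u - {u'}) = card (neighbours E u) - 1" "0 < card (neighbours E u)"
    using fin card_gt_0_iff by (auto simp: card_Diff_singleton)
  then show ?thesis unfolding degree_def by simp
qed

lemma toward_u_image_degree_2:
  assumes nb: "neighbours T u = {u'}"
  shows "(\<lambda>w. toward w u) ` (neighbours E u - {u'}) \<subseteq> {x \<in> V. degree T x = 2}"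
proof
  fix x assume "x \<in> (\<lambda>w. toward w u) ` (neighbours E u - {u'})"
  then obtain w where w: "w \<in> neighbours E u - {u'}" "x = toward w u" by blast
  note chord = chord_at_u[OF nb w(1)]
  have "{w, x} \<in> T" "degree T x = 2"
    using toward(1)[OF chord(3) uV chord(4)] toward_u_of_chord(1)[OF chord(1,2)] w(2) by auto
  then show "x \<in> {x \<in> V. degree T x = 2}" using edge_in_V(2) by blast
qed

lemma v_neighbours_subset:
  assumes nb: "neighbours T u = {u'}"
  shows "neighbours E v \<subseteq>
    ({x \<in> V. degree T x = 2} - (\<lambda>w. toward w u) ` (neighbours E u - {u'})) \<union> {z}"
proof
  fix x assume "x \<in> neighbours E v"
  then have vx: "{v, x} \<in> E" by (simp add: mem_neighbours_iff)
  have xV: "x \<in> V" using E_edge[OF vx] by blast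
  have "x \<notin> (\<lambda>w. toward w u) ` (neighbours E u - {u'})"
    using vx toward_u_of_chord(2)[OF chord_at_u(1,2)[OF nb]] by blast
  moreover have "1 \<le> degree T x" using degree_pos[OF xV vV] E_edge[OF vx] by auto
  moreover have "degree T x \<noteq> 1" using v_nbr_not_leaf[OF vx] .
  moreover have "3 \<le> degree T x \<Longrightarrow> x = z" using v_nbr_branch_eq_z[OF vx] .
  ultimately show "x \<in> ({x \<in> V. degree T x = 2} - (\<lambda>w. toward w u) ` (neighbours E u - {u'})) \<union> {z}"
    using xV by force
qed

lemma degree_sum_bound: "degree E u + degree E v + cost V T \<le> card V + 2"
proof -
  obtain u' where nb: "neighbours T u = {u'}"
    using u_leg(2) unfolding degree_def by (rule card_1_singletonE)
  let ?A = "neighbours E u - {u'}"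
  let ?fA = "(\<lambda>w. toward w u) ` ?A"
  let ?D2 = "{x \<in> V. degree T x = 2}"
  have fA: "?fA \<subseteq> ?D2" and card_fA: "card ?fA = card ?A"
    using toward_u_image_degree_2[OF nb] card_image[OF toward_u_inj_on[OF nb]] by auto
  have "degree E v \<le> card ((?D2 - ?fA) \<union> {z})"
    using card_mono[OF _ v_neighbours_subset[OF nb]] finite_V unfolding degree_def by simp
  also have "\<dots> \<le> card (?D2 - ?fA) + 1" using card_Un_le[of "?D2 - ?fA" "{z}"] by simp
  also have "card (?D2 - ?fA) = card ?D2 - card ?A"
    using card_Diff_subset[OF finite_subset[OF fA] fA] card_fA finite_V by simp
  finally have dv: "degree E v \<le> card ?D2 - card ?A + 1" .
  have "card ?A \<le> card ?D2" using card_mono[OF _ fA] card_fA finite_V by simp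
  moreover have "\<forall>x\<in>V. 1 \<le> degree T x"
    using degree_pos[OF _ zV] dz by (metis le_trans one_le_numeral)
  ultimately show ?thesis using degree_E_u[OF nb] dv card_V_eq_cost_plus_degree_2 by linarith
qed

end

section \<open>The spanning tree bound\<close>

lemma (in tree_on) cost_le_2_if_degrees_le_2:
  assumes "\<forall>x\<in>V. degree T x \<le> 2"
  shows "cost V T \<le> 2"
proof -
  have "branch_vertices V T = {}" using assms unfolding branch_vertices_def by fastforce
  then show ?thesis using card_leaves_le_2[OF assms] unfolding cost_def by simp
qed

lemma exists_extremal_end_branch_config:
  assumes mc: "min_cost_tree V E T0" and "\<exists>z\<in>V. 3 \<le> degree T0 z"
  shows "\<exists>T z c. end_branch_config V E T z c \<and>
    (\<forall>T' c'. end_branch_config V E T' z c' \<longrightarrow> degree T z \<le> degree T' z)"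
proof -
  interpret tree_on V T0 using min_cost_tree_tree_on[OF mc] .
  obtain z0 c0 where "end_branch_config V E T0 z0 c0"
    using exists_end_branch[OF assms(2)] mc unfolding end_branch_config_def by blast
  let ?P = "\<lambda>(T, z, c). end_branch_config V E T z c"
  let ?m = "\<lambda>(T, z, c). degree T z"
  have "?P (T0, z0, c0)" using \<open>end_branch_config V E T0 z0 c0\<close> by simp
  then obtain t where t: "?P t" and min: "\<And>t'. ?P t' \<Longrightarrow> ?m t \<le> ?m t'"
    using ex_has_least_nat[of ?P "(T0, z0, c0)" ?m] by blast
  obtain T z c where t_eq: "t = (T, z, c)" by (cases t)
  have "degree T z \<le> degree T' z" if "end_branch_config V E T' z c'" for T' c'
    using min[of "(T', z, c')"] that t_eq by simp
  moreover have "end_branch_config V E T z c" using t t_eq by simp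
  ultimately show ?thesis by blast
qed

lemma extremal_end_branch_config_degree_bound:
  assumes sg: "simple_graph V E" and cf: "end_branch_config V E T z c"
    and min: "\<And>T' c'. end_branch_config V E T' z c' \<Longrightarrow> degree T z \<le> degree T' z"
  shows "\<exists>u v. u \<in> V \<and> v \<in> V \<and> u \<noteq> v \<and> {u, v} \<notin> E \<and>
    degree E u + degree E v + cost V T \<le> card V + 2"
proof -
  have mc: "min_cost_tree V E T" and dz: "3 \<le> degree T z" and zc: "{z, c} \<in> T"
    using cf unfolding end_branch_config_def by blast+
  interpret tree_on V T using min_cost_tree_tree_on[OF mc] .
  let ?N = "neighbours T z - {c}"
  have "2 \<le> card ?N"
    using dz zc finite_neighbours unfolding degree_def by (simp add: card_Diff_singleton mem_neighbours_iff)
  then have "\<not> card ?N \<le> Suc 0" by simp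
  then obtain c1 c2 where c12: "c1 \<in> ?N" "c2 \<in> ?N" "c1 \<noteq> c2"
    using card_le_Suc0_iff_eq[OF finite_Diff[OF finite_neighbours]] by blast
  then have zc1: "{z, c1} \<in> T" "c1 \<noteq> c" and zc2: "{z, c2} \<in> T" "c2 \<noteq> c"
    by (auto simp: mem_neighbours_iff)
  obtain v where v: "reach (del_vertex T z) c1 v" "degree T v = 1"
    "\<And>x. reach (del_vertex T z) c1 x \<Longrightarrow> degree T x = 1 \<Longrightarrow> x = v"
    using end_branch_config_leg_leaf[OF cf zc1] by blast
  obtain u where u: "reach (del_vertex T z) c2 u" "degree T u = 1"
    using end_branch_config_leg_leaf[OF cf zc2] by blast
  interpret extremal_legs V T E z c c1 c2 u v
    using sg cf min zc1 zc2(1) c12(3) v u(1,2) by unfold_locales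
  show ?thesis using uV vV uv u_v_nonadjacent degree_sum_bound by blast
qed

lemma sigma_2_le_degree_sum:
  assumes sg: "simple_graph V E" and uv: "u \<in> V" "v \<in> V" "u \<noteq> v" "{u, v} \<notin> E"
  shows "sigma 2 V E \<le> enat (degree E u + degree E v)"
proof -
  have "{x, y} \<notin> E" if "x \<in> {u, v}" "y \<in> {u, v}" for x y
  proof (cases "x = y")
    case True
    then show ?thesis using simple_graph_edgeD(3)[OF sg, of x y] by blast
  next
    case False
    then have "{x, y} = {u, v}" using that by auto
    then show ?thesis using uv(4) by simp
  qed
  then have "independent_set V E {u, v}" using uv(1,2) unfolding independent_set_def by blast
  moreover have "card {u, v} = 2" "(\<Sum>x\<in>{u, v}. degree E x) = degree E u + degree E v"
    using uv(3) by simp_all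
  ultimately show ?thesis unfolding sigma_def by (metis (mono_tags, lifting) Inf_lower mem_Collect_eq)
qed

lemma min_cost_tree_path_or_degree_sum_bound:
  assumes sg: "simple_graph V E" and conn: "connected_graph V E"
  obtains T where "min_cost_tree V E T" "cost V T \<le> 2"
  | T u v where "min_cost_tree V E T" "u \<in> V" "v \<in> V" "u \<noteq> v" "{u, v} \<notin> E"
      "degree E u + degree E v + cost V T \<le> card V + 2"
proof -
  obtain T0 where mc0: "min_cost_tree V E T0" using min_cost_tree_exists[OF sg conn] by blast
  interpret T0: tree_on V T0 using min_cost_tree_tree_on[OF mc0] .
  show thesis
  proof (cases "\<forall>x\<in>V. degree T0 x \<le> 2")
    case True
    then show thesis using that(1) mc0 T0.cost_le_2_if_degrees_le_2 by blast
  next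
    case False
    then obtain z0 where "z0 \<in> V" "2 < degree T0 z0" by (auto simp: not_le)
    then have "\<exists>z\<in>V. 3 \<le> degree T0 z" by (intro bexI[of _ z0]) auto
    then obtain T z c where cf: "end_branch_config V E T z c"
      and min: "\<And>T' c'. end_branch_config V E T' z c' \<Longrightarrow> degree T z \<le> degree T' z"
      using exists_extremal_end_branch_config[OF mc0] by blast
    moreover have "min_cost_tree V E T" using cf unfolding end_branch_config_def by blast
    ultimately show thesis using that(2) extremal_end_branch_config_degree_bound[OF sg] by metis
  qed
qed

theorem mainTheorem2:
  fixes V :: "'a set" and E :: "'a set set" and k :: nat
  assumes "simple_graph V E"
    and "connected_graph V E"
    and "K14_free V E"
    and "k \<ge> 1"
    and "sigma 2 V E \<ge> enat (card V - k)"
  shows "\<exists>T. spanning_tree V E T \<and>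
           card (leaves V T) + card (branch_vertices V T) \<le> k + 2"
proof -
  have finite: "finite V" using assms(1) by (simp add: simple_graph_def)
  obtain T where "min_cost_tree V E T" "cost V T \<le> k + 2"
  proof (rule min_cost_tree_path_or_degree_sum_bound[OF assms(1,2)])
    fix T u v
    assume mc: "min_cost_tree V E T" and uv: "u \<in> V" "v \<in> V" "u \<noteq> v" "{u, v} \<notin> E"
      and bound: "degree E u + degree E v + cost V T \<le> card V + 2"
    have "card V - k \<le> degree E u + degree E v"
      using order_trans[OF assms(5) sigma_2_le_degree_sum[OF assms(1) uv]] by simp
    \<comment> \<open>if card V < k the subtraction truncates, but then cost V T \<le> card V suffices\<close>
    moreover have "cost V T \<le> card V" using cost_le_card[OF finite] .
    ultimately have "cost V T \<le> k + 2" using bound by linarith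
    then show thesis using that mc by blast
  qed (use that in auto)
  then show ?thesis unfolding min_cost_tree_def cost_def by blast
qed

end
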